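(* Let $n\ge1$, $1\le\ell\le n$, and let $\widetilde{\mathbf k}=(\widetilde k_{ji})_{1\le i\le j\le n+1}$ be a tuple of non-negative integers. Then, in $\mathsf{Ch}_n$, $$\mathfrak C_{\widetilde{\mathbf k}}(a_1,\dots,a_\ell,a_\ell,a_{\ell+1},\dots,a_n)=\mathfrak C_{\mathbf k}(a_1,\dots,a_n),$$ where $\mathbf k=(k_{ji})_{1\le i\le j\le n}$ is given by $$k_{ji}=\begin{cases}\widetilde k_{ji}& \text{if } j<\ell,\\ \widetilde k_{\ell i}+\widetilde k_{(\ell+1)i}&\text{if } j=\ell>i,\\ \widetilde k_{\ell\ell}+2\widetilde k_{(\ell+1)\ell}+\widetilde k_{(\ell+1)(\ell+1)}&\text{if } j=i=\ell,\\ \widetilde k_{(j+1)i}&\text{if } j>\ell>i,\\ \widetilde k_{(j+1)\ell}+\widetilde k_{(j+1)(\ell+1)}&\text{if } j>i=\ell,\\ \widetilde k_{(j+1)(i+1)}&\text{if } j,i>\ell.\end{cases}$$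
   Context: The Chinese monoid of rank $m$ is $\mathsf{Ch}_m=\langle a_1,\dots,a_m\rangle$ with relations $a_ja_ka_i=a_ka_ja_i=a_ka_ia_j$ for all $1\le i\le j\le k\le m$. For a tuple $\mathbf k=(k_{ji})_{1\le i\le j\le m}$ of non-negative integers and elements $x_1,\dots,x_m$ of a monoid, the canonical-form word is $\mathfrak C_{\mathbf k}(x_1,\dots,x_m)=b_1b_2\cdots b_m$ where $b_j=(x_jx_1)^{k_{j1}}(x_jx_2)^{k_{j2}}\cdots(x_jx_{j-1})^{k_{j(j-1)}}x_j^{k_{jj}}$ (so $b_1=x_1^{k_{11}}$). Every element of $\mathsf{Ch}_m$ equals $\mathfrak C_{\mathbf k}(a_1,\dots,a_m)$ for a unique such tuple $\mathbf k$ (the canonical form). In the left-hand side above, the word $\mathfrak C_{\widetilde{\mathbf k}}$ in $n+1$ variables is evaluated at the $n+1$ elements $a_1,\dots,a_\ell,a_\ell,a_{\ell+1},\dots,a_n$ of $\mathsf{Ch}_n$ (the generator $a_\ell$ repeated). *)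

theory Defs
  imports Main
begin

text \<open>The Chinese monoid Ch_n is modelled as the free monoid on the generators
  a_1..a_n (words = lists of indices in {1..n}) modulo the congruence generated by
  the defining relations a_j a_k a_i = a_k a_j a_i = a_k a_i a_j (i \<le> j \<le> k).\<close>

inductive chinese_step :: "nat \<Rightarrow> nat list \<Rightarrow> nat list \<Rightarrow> bool" for n where
  rel1: "\<lbrakk>1 \<le> i; i \<le> j; j \<le> k; k \<le> n\<rbrakk> \<Longrightarrow>
         chinese_step n (u @ [j, k, i] @ v) (u @ [k, j, i] @ v)"
| rel2: "\<lbrakk>1 \<le> i; i \<le> j; j \<le> k; k \<le> n\<rbrakk> \<Longrightarrow>
         chinese_step n (u @ [k, j, i] @ v) (u @ [k, i, j] @ v)"

definition chinese_eq :: "nat \<Rightarrow> nat list \<Rightarrow> nat list \<Rightarrow> bool" where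
  "chinese_eq n u v \<longleftrightarrow> set u \<subseteq> {1..n} \<and> set v \<subseteq> {1..n} \<and>
     (symclp (chinese_step n))\<^sup>*\<^sup>* u v"

text \<open>Canonical-form word C_k(x_1,...,x_m) = b_1 ... b_m with
  b_j = (x_j x_1)^{k_{j1}} ... (x_j x_{j-1})^{k_{j(j-1)}} x_j^{k_{jj}};
  the elements x_i are given as words (representatives).\<close>
definition canon_word :: "nat \<Rightarrow> (nat \<Rightarrow> nat \<Rightarrow> nat) \<Rightarrow> (nat \<Rightarrow> 'a list) \<Rightarrow> 'a list" where
  "canon_word m k x =
     concat (map (\<lambda>j. concat (map (\<lambda>i. concat (replicate (k j i) (x j @ x i))) [1..<j])
                      @ concat (replicate (k j j) (x j))) [1..<m+1])"

definition collapse_k :: "nat \<Rightarrow> (nat \<Rightarrow> nat \<Rightarrow> nat) \<Rightarrow> nat \<Rightarrow> nat \<Rightarrow> nat" where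
  "collapse_k l kt j i =
     (if j < l then kt j i
      else if j = l \<and> i < l then kt l i + kt (l+1) i
      else if j = l \<and> i = l then kt l l + 2 * kt (l+1) l + kt (l+1) (l+1)
      else if j > l \<and> i < l then kt (j+1) i
      else if j > l \<and> i = l then kt (j+1) l + kt (j+1) (l+1)
      else if j > l \<and> i > l then kt (j+1) (i+1)
      else 0)"

end

theory Submission
  imports Defs
begin

(* Substituting a_l for both x_l and x_(l+1) leaves the blocks b_j with j < l unchanged, and turns
   every block b_j with j > l+1 into the block b_(j-1) of the collapsed tuple, its factors
   (a_(j-1) a_l)^.. and (a_(j-1) a_(l+1))^.. having become adjacent powers of the same word.
   The only relations needed concern b_l b_(l+1): in Ch_n the generator a_l commutes with every
   a_l a_i (i <= l), and any two such words commute, so b_l b_(l+1) rearranges into the single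
   block (a_l a_1)^.. ... (a_l a_(l-1))^.. a_l^(k_ll + 2 k_(l+1)l + k_(l+1)(l+1)). *)

abbreviation ch_equiv :: "nat \<Rightarrow> nat list \<Rightarrow> nat list \<Rightarrow> bool" where
  "ch_equiv n \<equiv> equivclp (chinese_step n)"

lemma chinese_step_append:
  "chinese_step n u v \<Longrightarrow> chinese_step n (p @ u @ s) (p @ v @ s)"
proof (induction rule: chinese_step.induct)
  case (rel1 i j k u v)
  then show ?case using chinese_step.rel1[of i j k n "p @ u" "v @ s"] by simp
next
  case (rel2 i j k u v)
  then show ?case using chinese_step.rel2[of i j k n "p @ u" "v @ s"] by simp
qed

lemma ch_equiv_append_context:
  "ch_equiv n u v \<Longrightarrow> ch_equiv n (p @ u @ s) (p @ v @ s)"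
  by (induction rule: equivclp_induct) (auto intro: equivclp_into_equivclp chinese_step_append)

lemma ch_equiv_append:
  assumes "ch_equiv n u u'" and "ch_equiv n v v'"
  shows "ch_equiv n (u @ v) (u' @ v')"
  using ch_equiv_append_context[OF assms(1), of "[]" v] ch_equiv_append_context[OF assms(2), of u' "[]"]
  by (auto intro: equivclp_trans)

lemma ch_equiv_concat_map:
  assumes "\<And>i. i \<in> set xs \<Longrightarrow> ch_equiv n (f i) (g i)"
  shows "ch_equiv n (concat (map f xs)) (concat (map g xs))"
  using assms by (induction xs) (auto intro: ch_equiv_append)

definition ch_commute :: "nat \<Rightarrow> nat list \<Rightarrow> nat list \<Rightarrow> bool" where
  "ch_commute n u v \<longleftrightarrow> ch_equiv n (u @ v) (v @ u)"

lemma ch_commute_sym: "ch_commute n u v \<Longrightarrow> ch_commute n v u"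
  by (simp add: ch_commute_def equivclp_sym)

lemma ch_commute_concat_right:
  assumes "\<And>v. v \<in> set vs \<Longrightarrow> ch_commute n u v"
  shows "ch_commute n u (concat vs)"
  using assms
proof (induction vs)
  case (Cons v vs)
  have "ch_equiv n (u @ v @ concat vs) (v @ u @ concat vs)"
    using Cons.prems ch_equiv_append_context[of n "u @ v" "v @ u" "[]" "concat vs"]
    by (simp add: ch_commute_def)
  also have "ch_equiv n \<dots> (v @ concat vs @ u)"
    using Cons ch_equiv_append_context[of n _ _ v "[]"] by (simp add: ch_commute_def)
  finally show ?case by (simp add: ch_commute_def)
qed (simp add: ch_commute_def)

lemma ch_commute_concat:
  assumes "\<And>u v. u \<in> set us \<Longrightarrow> v \<in> set vs \<Longrightarrow> ch_commute n u v"
  shows "ch_commute n (concat us) (concat vs)"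
  using assms by (metis ch_commute_concat_right ch_commute_sym)

lemma ch_commute_replicate:
  "ch_commute n u v \<Longrightarrow> ch_commute n (concat (replicate a u)) (concat (replicate b v))"
  by (rule ch_commute_concat) simp

lemma ch_commute_gen_pair:
  assumes "1 \<le> i" and "i \<le> L" and "L \<le> n"
  shows "ch_commute n [L] [L, i]"
  using chinese_step.rel2[of i L L n "[]" "[]"] assms
  by (auto simp: ch_commute_def intro: r_into_equivclp)

lemma ch_commute_pairs_le:
  assumes "1 \<le> i'" and "i' \<le> i" and "i \<le> L" and "L \<le> n"
  shows "ch_commute n [L, i] [L, i']"
proof -
  have "chinese_step n [L, i, L, i'] [L, L, i, i']"
    using chinese_step.rel1[of i' i L n "[L]" "[]"] assms by simp
  moreover have "chinese_step n [L, L, i, i'] [L, L, i', i]"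
    using chinese_step.rel2[of i' i L n "[L]" "[]"] assms by simp
  moreover have "chinese_step n [L, L, i', i] [L, i', L, i]"
    using chinese_step.rel2[of i' L L n "[]" "[i]"] assms by simp
  ultimately have "ch_equiv n [L, i, L, i'] [L, i', L, i]"
    by (meson equivclp_trans r_into_equivclp)
  then show ?thesis by (simp add: ch_commute_def)
qed

lemma ch_commute_pairs:
  assumes "1 \<le> i" and "1 \<le> i'" and "i \<le> L" and "i' \<le> L" and "L \<le> n"
  shows "ch_commute n [L, i] [L, i']"
  using assms ch_commute_pairs_le[of i' i L n] ch_commute_pairs_le[of i i' L n]
  by (cases "i' \<le> i") (auto intro: ch_commute_sym)

lemma ch_equiv_concat_map_shuffle:
  assumes "\<And>i j. i \<in> set xs \<Longrightarrow> j \<in> set xs \<Longrightarrow> ch_commute n (f i) (g j)"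
  shows "ch_equiv n (concat (map f xs) @ concat (map g xs)) (concat (map (\<lambda>i. f i @ g i) xs))"
  using assms
proof (induction xs)
  case (Cons x xs)
  have "ch_commute n (concat (map f xs)) (g x)"
    using Cons.prems ch_commute_concat[of "map f xs" "[g x]" n] by auto
  then have "ch_equiv n (f x @ (concat (map f xs) @ g x) @ concat (map g xs))
                        (f x @ (g x @ concat (map f xs)) @ concat (map g xs))"
    unfolding ch_commute_def by (rule ch_equiv_append_context)
  also have "ch_equiv n \<dots> ((f x @ g x) @ concat (map (\<lambda>i. f i @ g i) xs) @ [])"
    using Cons by (simp add: ch_equiv_append_context[of n _ _ "f x @ g x" "[]", simplified])
  finally show ?case by simp
qed simp

lemma ch_equiv_concat_map_collapse:
  assumes "a \<le> l" and "l < b"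
    and below: "\<And>i. i < l \<Longrightarrow> ch_equiv n (f i) (g i)"
    and merged: "ch_equiv n (f l @ f (Suc l)) (g l)"
    and above: "\<And>i. l < i \<Longrightarrow> ch_equiv n (f (Suc i)) (g i)"
  shows "ch_equiv n (concat (map f [a..<Suc b])) (concat (map g [a..<b]))"
proof -
  from \<open>l < b\<close> have "Suc l \<le> b" by simp
  then show ?thesis
  proof (induction b rule: dec_induct)
    case base
    have "ch_equiv n (concat (map f [a..<l])) (concat (map g [a..<l]))"
      using below by (intro ch_equiv_concat_map) simp
    then show ?case
      using \<open>a \<le> l\<close> merged by (simp add: ch_equiv_append)
  next
    case (step m)
    then show ?case
      using ch_equiv_append[OF step.IH above[of m]] \<open>a \<le> l\<close> by simp
  qed
qed

lemma set_concat_replicate_subset: "set (concat (replicate m xs)) \<subseteq> set xs"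
  by (induction m) auto

definition canon_block :: "(nat \<Rightarrow> nat \<Rightarrow> nat) \<Rightarrow> (nat \<Rightarrow> 'a list) \<Rightarrow> nat \<Rightarrow> 'a list" where
  "canon_block k x j =
     concat (map (\<lambda>i. concat (replicate (k j i) (x j @ x i))) [1..<j]) @ concat (replicate (k j j) (x j))"

lemma canon_word_eq_concat_blocks: "canon_word m k x = concat (map (canon_block k x) [1..<Suc m])"
  unfolding canon_word_def canon_block_def[abs_def] by simp

lemma set_canon_block: "1 \<le> j \<Longrightarrow> set (canon_block k x j) \<subseteq> (\<Union>i\<in>{1..j}. set (x i))"
  unfolding canon_block_def set_append set_concat set_map
  using set_concat_replicate_subset[of _ "x j"] set_concat_replicate_subset[of _ "x j @ _"]
  by (fastforce simp del: set_concat)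

lemma set_canon_word: "set (canon_word m k x) \<subseteq> (\<Union>j\<in>{1..m}. set (x j))"
  unfolding canon_word_eq_concat_blocks set_concat set_map
  using set_canon_block by (fastforce simp del: set_concat)

definition gens_with_repeat :: "nat \<Rightarrow> nat \<Rightarrow> nat list" where
  "gens_with_repeat l i = [if i \<le> l then i else i - 1]"

lemma canon_block_below:
  assumes "j < l"
  shows "canon_block kt (gens_with_repeat l) j = canon_block (collapse_k l kt) (\<lambda>i. [i]) j"
  using assms unfolding canon_block_def
  by (intro arg_cong2[where f = append] arg_cong[where f = concat] map_cong)
     (auto simp: collapse_k_def gens_with_repeat_def)

lemma canon_block_above:
  assumes "1 \<le> l" and "l < j"
  shows "ch_equiv n (canon_block kt (gens_with_repeat l) (Suc j)) (canon_block (collapse_k l kt) (\<lambda>i. [i]) j)"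
proof -
  let ?f = "\<lambda>i. concat (replicate (kt (Suc j) i) (gens_with_repeat l (Suc j) @ gens_with_repeat l i))"
  let ?g = "\<lambda>i. concat (replicate (collapse_k l kt j i) ([j] @ [i]))"
  have "ch_equiv n (concat (map ?f [1..<Suc j])) (concat (map ?g [1..<j]))"
  proof (rule ch_equiv_concat_map_collapse[OF assms])
    show "ch_equiv n (?f i) (?g i)" if "i < l" for i
      using that assms by (simp add: collapse_k_def gens_with_repeat_def)
    show "ch_equiv n (?f l @ ?f (Suc l)) (?g l)"
      using assms by (simp add: collapse_k_def gens_with_repeat_def replicate_add)
    show "ch_equiv n (?f (Suc i)) (?g i)" if "l < i" for i
      using that assms by (simp add: collapse_k_def gens_with_repeat_def)
  qed
  moreover have "ch_equiv n (concat (replicate (kt (Suc j) (Suc j)) (gens_with_repeat l (Suc j))))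
      (concat (replicate (collapse_k l kt j j) [j]))"
    using assms by (simp add: collapse_k_def gens_with_repeat_def)
  ultimately show ?thesis
    unfolding canon_block_def by (rule ch_equiv_append)
qed

lemma canon_block_merge:
  assumes "1 \<le> l" and "l \<le> n"
  shows "ch_equiv n (canon_block kt (gens_with_repeat l) l @ canon_block kt (gens_with_repeat l) (Suc l))
                    (canon_block (collapse_k l kt) (\<lambda>i. [i]) l)"
proof -
  define P where "P = concat (map (\<lambda>i. concat (replicate (kt l i) [l, i])) [1..<l])"
  define Q where "Q = concat (map (\<lambda>i. concat (replicate (kt (Suc l) i) [l, i])) [1..<l])"
  define R where "R = concat (map (\<lambda>i. concat (replicate (kt l i + kt (Suc l) i) [l, i])) [1..<l])"
  let ?rest = "replicate (2 * kt (Suc l) l + kt (Suc l) (Suc l)) l"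
  have pair_power: "concat (replicate m [l, l]) = replicate (2 * m) l" for m
    by (induction m) auto
  have P_eq: "concat (map (\<lambda>i. concat (replicate (kt l i) (gens_with_repeat l l @ gens_with_repeat l i))) [1..<l]) = P"
    and Q_eq: "concat (map (\<lambda>i. concat (replicate (kt (Suc l) i) (gens_with_repeat l (Suc l) @ gens_with_repeat l i))) [1..<l]) = Q"
    and R_eq: "concat (map (\<lambda>i. concat (replicate (collapse_k l kt l i) ([l] @ [i]))) [1..<l]) = R"
    unfolding P_def Q_def R_def
    by (intro arg_cong[where f = concat] map_cong; simp add: gens_with_repeat_def collapse_k_def)+
  have "canon_block kt (gens_with_repeat l) l @ canon_block kt (gens_with_repeat l) (Suc l)
      = P @ replicate (kt l l) l @ Q @ ?rest"
    using assms unfolding canon_block_def P_eq[symmetric] Q_eq[symmetric]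
    by (simp add: gens_with_repeat_def pair_power replicate_add)
  also have "ch_equiv n \<dots> (P @ Q @ replicate (kt l l) l @ ?rest)"
  proof -
    have "ch_commute n (replicate (kt l l) l) (concat (replicate m [l, i]))" if "1 \<le> i" "i < l" for i m
      using ch_commute_replicate[OF ch_commute_gen_pair[of i l n], of "kt l l" m] that assms by simp
    then have "ch_commute n (replicate (kt l l) l) Q"
      unfolding Q_def by (intro ch_commute_concat_right) auto
    from ch_equiv_append_context[OF this[unfolded ch_commute_def], of P ?rest]
    show ?thesis by simp
  qed
  also have "ch_equiv n \<dots> (R @ replicate (kt l l) l @ ?rest)"
  proof -
    have "ch_equiv n (P @ Q)
        (concat (map (\<lambda>i. concat (replicate (kt l i) [l, i]) @ concat (replicate (kt (Suc l) i) [l, i])) [1..<l]))"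
      unfolding P_def Q_def using assms
      by (intro ch_equiv_concat_map_shuffle ch_commute_replicate ch_commute_pairs) auto
    then have "ch_equiv n (P @ Q) R"
      unfolding R_def by (simp add: replicate_add)
    then show ?thesis
      using ch_equiv_append by fastforce
  qed
  also have "\<dots> = canon_block (collapse_k l kt) (\<lambda>i. [i]) l"
    unfolding canon_block_def R_eq by (simp add: collapse_k_def replicate_add)
  finally show ?thesis .
qed

theorem lemma1p4:
  fixes n l :: nat and kt :: "nat \<Rightarrow> nat \<Rightarrow> nat"
  assumes "1 \<le> n" and "1 \<le> l" and "l \<le> n"
  shows "chinese_eq n
           (canon_word (n+1) kt (\<lambda>i. [if i \<le> l then i else i - 1]))
           (canon_word n (collapse_k l kt) (\<lambda>i. [i]))"
proof -
  have gens: "(\<lambda>i. [if i \<le> l then i else i - 1]) = gens_with_repeat l"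
    by (simp add: fun_eq_iff gens_with_repeat_def)
  have "ch_equiv n (concat (map (canon_block kt (gens_with_repeat l)) [1..<Suc (Suc n)]))
                   (concat (map (canon_block (collapse_k l kt) (\<lambda>i. [i])) [1..<Suc n]))"
    using assms
    by (intro ch_equiv_concat_map_collapse[of 1 l]) (simp_all add: canon_block_below canon_block_above canon_block_merge)
  then have "ch_equiv n (canon_word (n+1) kt (gens_with_repeat l)) (canon_word n (collapse_k l kt) (\<lambda>i. [i]))"
    by (simp add: canon_word_eq_concat_blocks)
  moreover have "set (canon_word (n+1) kt (gens_with_repeat l)) \<subseteq> {1..n}"
  proof (rule order_trans[OF set_canon_word])
    show "(\<Union>j\<in>{1..n+1}. set (gens_with_repeat l j)) \<subseteq> {1..n}"
      using assms by (auto simp: gens_with_repeat_def)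
  qed
  moreover have "set (canon_word n (collapse_k l kt) (\<lambda>i. [i])) \<subseteq> {1..n}"
    using set_canon_word[of n "collapse_k l kt" "\<lambda>i. [i]"] by auto
  ultimately show ?thesis
    unfolding chinese_eq_def gens equivclp_def by blast
qed

end
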